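(* Let $F_0$ be a QF-NIA formula, and let $F$ be a linearization of $F_0$ with artificial bounds $B$. Let $\mathrm{vars}(B)$ be the set of variables $V$ for which an artificial domain $[l_V,u_V]$ is imposed by $B$ (each bound of $B$ being of the form $l_V\le V$ or $V\le u_V$ for some $V\in\mathrm{vars}(B)$). For a model $M$ of $F$ define $$\mathrm{cost}(M)=\sum_{V\in\mathrm{vars}(B)}\delta(M(V),[l_V,u_V]),$$ where $\delta(z,[l,u])=l-z$ if $z<l$, $\delta(z,[l,u])=0$ if $l\le z\le u$, and $\delta(z,[l,u])=z-u$ if $z>u$. Then $\mathrm{cost}$ is admissible: $\mathrm{cost}(M)\ge 0$ for every model $M$ of $F$, and if $\mathrm{cost}(M)=0$ then $M$ (restricted to the variables of $F_0$) is a model of $F_0$.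
   Context: A QF-NIA formula is a quantifier-free CNF formula whose atoms are polynomial inequalities with integer coefficients over integer-valued variables. Artificial bounds are a finite set $B$ of constraints $V\ge L$ or $V\le U$ ($L,U\in\mathbb{Z}$) on variables of $F_0$. A linearization $F$ of $F_0$ with artificial bounds $B$ is a QF-LIA formula obtained as follows. While some non-linear monomial $Q$ occurs, pick a variable $V$ of $Q$ that has both a lower bound $l$ and an upper bound $u$ in $F_0\cup B$. Introduce a fresh integer variable $v_Q$ and replace every occurrence of $Q$ by $v_Q$. Add, for each integer $K$ with $l\le K\le u$, the clause $V=K\rightarrow v_Q=Q[V:=K]$, where $Q[V:=K]$ is $Q$ with $V$ evaluated at $K$. New non-linear monomials appearing in these clauses are processed in the same way. $F$ does not contain the bounds of $B$. A model of $F$ is an integer assignment to all variables of $F$ (original and fresh) satisfying $F$. *)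

theory Defs
  imports Main "HOL-Library.Multiset"
begin

text \<open>A monomial is a multiset of variables (the empty multiset is the constant
monomial 1); a polynomial is a finite sum of integer-coefficient monomials,
given as a list of (coefficient, monomial) pairs.\<close>

type_synonym 'v monomial = "'v multiset"
type_synonym 'v poly = "(int \<times> 'v monomial) list"

datatype rel = Lt | Le | Eq | Ne | Ge | Gt

text \<open>An atom \<open>Atom r p q\<close> stands for the polynomial (in)equality \<open>p r q\<close>.
A clause is a disjunction of atoms, a CNF formula a conjunction of clauses.\<close>
datatype 'v atom = Atom rel "'v poly" "'v poly"

type_synonym 'v clause = "'v atom list"
type_synonym 'v formula = "'v clause list"

definition eval_mono :: "('v \<Rightarrow> int) \<Rightarrow> 'v monomial \<Rightarrow> int" where
  "eval_mono M m = prod_mset (image_mset M m)"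

definition eval_poly :: "('v \<Rightarrow> int) \<Rightarrow> 'v poly \<Rightarrow> int" where
  "eval_poly M p = (\<Sum>(c, m)\<leftarrow>p. c * eval_mono M m)"

fun eval_rel :: "rel \<Rightarrow> int \<Rightarrow> int \<Rightarrow> bool" where
  "eval_rel Lt a b = (a < b)"
| "eval_rel Le a b = (a \<le> b)"
| "eval_rel Eq a b = (a = b)"
| "eval_rel Ne a b = (a \<noteq> b)"
| "eval_rel Ge a b = (a \<ge> b)"
| "eval_rel Gt a b = (a > b)"

fun sat_atom :: "('v \<Rightarrow> int) \<Rightarrow> 'v atom \<Rightarrow> bool" where
  "sat_atom M (Atom r p q) = eval_rel r (eval_poly M p) (eval_poly M q)"

definition sat_clause :: "('v \<Rightarrow> int) \<Rightarrow> 'v clause \<Rightarrow> bool" where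
  "sat_clause M C = (\<exists>a\<in>set C. sat_atom M a)"

text \<open>\<open>M\<close> is a model of \<open>F\<close>.  Assignments are total; only the values on the
variables of \<open>F\<close> matter.\<close>
definition sat_formula :: "('v \<Rightarrow> int) \<Rightarrow> 'v formula \<Rightarrow> bool" where
  "sat_formula M F = (\<forall>C\<in>set F. sat_clause M C)"

definition poly_vars :: "'v poly \<Rightarrow> 'v set" where
  "poly_vars p = (\<Union>(c, m)\<in>set p. set_mset m)"

fun atom_vars :: "'v atom \<Rightarrow> 'v set" where
  "atom_vars (Atom r p q) = poly_vars p \<union> poly_vars q"

definition formula_vars :: "'v formula \<Rightarrow> 'v set" where
  "formula_vars F = (\<Union>C\<in>set F. \<Union>a\<in>set C. atom_vars a)"

fun atom_monos :: "'v atom \<Rightarrow> 'v monomial set" where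
  "atom_monos (Atom r p q) = snd ` set p \<union> snd ` set q"

definition formula_monos :: "'v formula \<Rightarrow> 'v monomial set" where
  "formula_monos F = (\<Union>C\<in>set F. \<Union>a\<in>set C. atom_monos a)"

definition nonlinear :: "'v monomial \<Rightarrow> bool" where
  "nonlinear m = (size m \<ge> 2)"

definition pvar :: "'v \<Rightarrow> 'v poly" where
  "pvar V = [(1, {#V#})]"

definition pconst :: "int \<Rightarrow> 'v poly" where
  "pconst K = [(K, {#})]"

text \<open>Artificial bounds: \<open>LowerB V L\<close> is \<open>V \<ge> L\<close>, \<open>UpperB V U\<close> is \<open>V \<le> U\<close>.\<close>
datatype 'v bound = LowerB 'v int | UpperB 'v int

definition bound_vars :: "'v bound set \<Rightarrow> 'v set" where
  "bound_vars B = {V. \<exists>K. LowerB V K \<in> B \<or> UpperB V K \<in> B}"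

definition has_lower :: "'v formula \<Rightarrow> 'v bound set \<Rightarrow> 'v \<Rightarrow> int \<Rightarrow> bool" where
  "has_lower F0 B V L =
     (LowerB V L \<in> B \<or> [Atom Ge (pvar V) (pconst L)] \<in> set F0
        \<or> [Atom Le (pconst L) (pvar V)] \<in> set F0)"

definition has_upper :: "'v formula \<Rightarrow> 'v bound set \<Rightarrow> 'v \<Rightarrow> int \<Rightarrow> bool" where
  "has_upper F0 B V U =
     (UpperB V U \<in> B \<or> [Atom Le (pvar V) (pconst U)] \<in> set F0
        \<or> [Atom Ge (pconst U) (pvar V)] \<in> set F0)"

definition repl_poly :: "'v monomial \<Rightarrow> 'v \<Rightarrow> 'v poly \<Rightarrow> 'v poly" where
  "repl_poly Q v p = map (\<lambda>(c, m). if m = Q then (c, {#v#}) else (c, m)) p"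

fun repl_atom :: "'v monomial \<Rightarrow> 'v \<Rightarrow> 'v atom \<Rightarrow> 'v atom" where
  "repl_atom Q v (Atom r p q) = Atom r (repl_poly Q v p) (repl_poly Q v q)"

definition repl_formula :: "'v monomial \<Rightarrow> 'v \<Rightarrow> 'v formula \<Rightarrow> 'v formula" where
  "repl_formula Q v F = map (map (repl_atom Q v)) F"

definition subst_mono :: "'v monomial \<Rightarrow> 'v \<Rightarrow> int \<Rightarrow> 'v poly" where
  "subst_mono Q V K = [(K ^ count Q V, filter_mset (\<lambda>x. x \<noteq> V) Q)]"

text \<open>The clause \<open>V = K \<longrightarrow> v = Q[V:=K]\<close>, i.e. \<open>V \<noteq> K \<or> v = Q[V:=K]\<close>.\<close>
definition lin_clause :: "'v monomial \<Rightarrow> 'v \<Rightarrow> 'v \<Rightarrow> int \<Rightarrow> 'v clause" where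
  "lin_clause Q v V K = [Atom Ne (pvar V) (pconst K), Atom Eq (pvar v) (subst_mono Q V K)]"

inductive lin_step :: "'v formula \<Rightarrow> 'v bound set \<Rightarrow> 'v formula \<Rightarrow> 'v formula \<Rightarrow> bool"
  for F0 :: "'v formula" and B :: "'v bound set" where
  "\<lbrakk> Q \<in> formula_monos G; nonlinear Q; V \<in># Q;
     has_lower F0 B V l; has_upper F0 B V u;
     v \<notin> formula_vars G; v \<notin> formula_vars F0; v \<notin> bound_vars B \<rbrakk>
   \<Longrightarrow> lin_step F0 B G (repl_formula Q v G @ map (lin_clause Q v V) [l..u])"

definition linearization :: "'v formula \<Rightarrow> 'v bound set \<Rightarrow> 'v formula \<Rightarrow> bool" where
  "linearization F0 B F =
     ((lin_step F0 B)\<^sup>*\<^sup>* F0 F \<and> (\<forall>Q\<in>formula_monos F. \<not> nonlinear Q))"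

definition delta :: "int \<Rightarrow> int \<Rightarrow> int \<Rightarrow> int" where
  "delta z l u = (if z < l then l - z else if z \<le> u then 0 else z - u)"

definition cost :: "'v set \<Rightarrow> ('v \<Rightarrow> int) \<Rightarrow> ('v \<Rightarrow> int) \<Rightarrow> ('v \<Rightarrow> int) \<Rightarrow> int" where
  "cost VB l u M = (\<Sum>V\<in>VB. delta (M V) (l V) (u V))"

end

theory Submission
  imports Defs
begin

text \<open>
  A linearization step replaces a monomial \<open>Q\<close> by a fresh \<open>v\<^sub>Q\<close> and adds the clauses
  \<open>V = K \<longrightarrow> v\<^sub>Q = Q[V:=K]\<close> for \<open>l \<le> K \<le> u\<close>.  If a model \<open>M\<close> of the result has \<open>M V\<close> inside
  \<open>[l, u]\<close>, the clause for \<open>K = M V\<close> forces \<open>M v\<^sub>Q = M Q\<close>, so \<open>M\<close> also satisfies the formula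
  before the step.  The bounds used by the steps come either from \<open>B\<close>, which \<open>M\<close> respects
  exactly when its cost is \<open>0\<close>, or from unit clauses of \<open>F\<^sub>0\<close>; these are linear, hence
  survive verbatim into \<open>F\<close> and are satisfied by \<open>M\<close>.  Undoing the steps one by one
  yields \<open>M \<Turnstile> F\<^sub>0\<close>.
\<close>

lemma eval_poly_pvar [simp]: "eval_poly M (pvar V) = M V"
  by (simp add: eval_poly_def pvar_def eval_mono_def)

lemma eval_poly_pconst [simp]: "eval_poly M (pconst K) = K"
  by (simp add: eval_poly_def pconst_def eval_mono_def)

lemma eval_repl_poly:
  assumes "M v = eval_mono M Q"
  shows "eval_poly M (repl_poly Q v p) = eval_poly M p"
  using assms by (induction p) (auto simp: eval_poly_def repl_poly_def eval_mono_def)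

lemma sat_repl_atom:
  assumes "M v = eval_mono M Q"
  shows "sat_atom M (repl_atom Q v a) = sat_atom M a"
  using assms by (cases a) (simp add: eval_repl_poly)

lemma sat_repl_formula:
  assumes "M v = eval_mono M Q"
  shows "sat_formula M (repl_formula Q v G) = sat_formula M G"
  using assms by (simp add: sat_formula_def sat_clause_def repl_formula_def sat_repl_atom)

lemma eval_mono_plus: "eval_mono M (A + A') = eval_mono M A * eval_mono M A'"
  by (simp add: eval_mono_def)

lemma eval_subst_mono:
  assumes "M V = K"
  shows "eval_poly M (subst_mono Q V K) = eval_mono M Q"
proof -
  have "eval_mono M Q
      = eval_mono M {#x \<in># Q. x = V#} * eval_mono M {#x \<in># Q. x \<noteq> V#}"
    by (subst multiset_partition[of Q "\<lambda>x. x = V"]) (rule eval_mono_plus)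
  also have "eval_mono M {#x \<in># Q. x = V#} = K ^ count Q V"
    using assms by (simp add: filter_eq_replicate_mset eval_mono_def)
  finally show ?thesis
    by (simp add: subst_mono_def eval_poly_def)
qed

lemma sat_lin_clause_at_value:
  assumes "sat_clause M (lin_clause Q v V (M V))"
  shows "M v = eval_mono M Q"
  using assms eval_subst_mono[of M V "M V" Q]
  by (simp add: sat_clause_def lin_clause_def)

lemma lin_step_sat_back:
  assumes step: "lin_step F0 B G G'" and sat: "sat_formula M G'"
    and lower: "\<And>V L. has_lower F0 B V L \<Longrightarrow> L \<le> M V"
    and upper: "\<And>V U. has_upper F0 B V U \<Longrightarrow> M V \<le> U"
  shows "sat_formula M G"
  using step
proof cases
  case (1 Q V l u v)
  have "M V \<in> set [l..u]"
    using lower[OF \<open>has_lower F0 B V l\<close>] upper[OF \<open>has_upper F0 B V u\<close>] by simp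
  then have "sat_clause M (lin_clause Q v V (M V))"
    using sat \<open>G' = _\<close> by (simp add: sat_formula_def)
  then have "M v = eval_mono M Q"
    by (rule sat_lin_clause_at_value)
  moreover have "sat_formula M (repl_formula Q v G)"
    using sat \<open>G' = _\<close> by (simp add: sat_formula_def)
  ultimately show ?thesis
    by (simp add: sat_repl_formula)
qed

lemma lin_steps_sat_back:
  assumes "(lin_step F0 B)\<^sup>*\<^sup>* G G'" "sat_formula M G'"
    and "\<And>V L. has_lower F0 B V L \<Longrightarrow> L \<le> M V"
    and "\<And>V U. has_upper F0 B V U \<Longrightarrow> M V \<le> U"
  shows "sat_formula M G"
  using assms by (induction rule: converse_rtranclp_induct) (auto intro: lin_step_sat_back)

definition linear_clause :: "'v clause \<Rightarrow> bool" where
  "linear_clause C = (\<forall>a\<in>set C. \<forall>m\<in>atom_monos a. \<not> nonlinear m)"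

lemma repl_poly_no_occurrence: "Q \<notin> snd ` set p \<Longrightarrow> repl_poly Q v p = p"
  unfolding repl_poly_def by (induction p) auto

lemma repl_atom_linear:
  assumes "nonlinear Q" "\<forall>m\<in>atom_monos a. \<not> nonlinear m"
  shows "repl_atom Q v a = a"
proof (cases a)
  case (Atom r p q)
  with assms have "Q \<notin> snd ` set p" "Q \<notin> snd ` set q"
    by auto
  with Atom show ?thesis
    by (simp add: repl_poly_no_occurrence)
qed

lemma lin_step_keeps_linear_clause:
  assumes "lin_step F0 B G G'" "C \<in> set G" "linear_clause C"
  shows "C \<in> set G'"
  using assms(1)
proof cases
  case (1 Q V l u v)
  have "map (repl_atom Q v) C = C"
    using \<open>nonlinear Q\<close> assms(3) by (simp add: map_idI linear_clause_def repl_atom_linear)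
  then have "C \<in> set (repl_formula Q v G)"
    using assms(2) unfolding repl_formula_def by (metis image_eqI list.set_map)
  then show ?thesis
    using \<open>G' = _\<close> by simp
qed

lemma lin_steps_keep_linear_clause:
  assumes "(lin_step F0 B)\<^sup>*\<^sup>* G G'" "C \<in> set G" "linear_clause C"
  shows "C \<in> set G'"
  using assms by (induction rule: rtranclp_induct) (auto intro: lin_step_keeps_linear_clause)

definition respects_bounds :: "('v \<Rightarrow> int) \<Rightarrow> 'v bound set \<Rightarrow> bool" where
  "respects_bounds M B =
     ((\<forall>V L. LowerB V L \<in> B \<longrightarrow> L \<le> M V) \<and> (\<forall>V U. UpperB V U \<in> B \<longrightarrow> M V \<le> U))"

lemma linear_clause_var_const:
  "linear_clause [Atom r (pvar V) (pconst K)]"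
  "linear_clause [Atom r (pconst K) (pvar V)]"
  by (simp_all add: linear_clause_def nonlinear_def pvar_def pconst_def)

lemma has_lower_le:
  assumes "has_lower F0 B V L" "respects_bounds M B"
    and linear_sat: "\<And>C. C \<in> set F0 \<Longrightarrow> linear_clause C \<Longrightarrow> sat_clause M C"
  shows "L \<le> M V"
  using assms(1) unfolding has_lower_def
proof (elim disjE)
  assume "LowerB V L \<in> B"
  then show ?thesis
    using assms(2) by (simp add: respects_bounds_def)
next
  assume "[Atom Ge (pvar V) (pconst L)] \<in> set F0"
  from linear_sat[OF this linear_clause_var_const(1)] show ?thesis
    by (simp add: sat_clause_def)
next
  assume "[Atom Le (pconst L) (pvar V)] \<in> set F0"
  from linear_sat[OF this linear_clause_var_const(2)] show ?thesis
    by (simp add: sat_clause_def)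
qed

lemma has_upper_ge:
  assumes "has_upper F0 B V U" "respects_bounds M B"
    and linear_sat: "\<And>C. C \<in> set F0 \<Longrightarrow> linear_clause C \<Longrightarrow> sat_clause M C"
  shows "M V \<le> U"
  using assms(1) unfolding has_upper_def
proof (elim disjE)
  assume "UpperB V U \<in> B"
  then show ?thesis
    using assms(2) by (simp add: respects_bounds_def)
next
  assume "[Atom Le (pvar V) (pconst U)] \<in> set F0"
  from linear_sat[OF this linear_clause_var_const(1)] show ?thesis
    by (simp add: sat_clause_def)
next
  assume "[Atom Ge (pconst U) (pvar V)] \<in> set F0"
  from linear_sat[OF this linear_clause_var_const(2)] show ?thesis
    by (simp add: sat_clause_def)
qed
theorem linearization_model_sound:
  assumes "linearization F0 B F" "sat_formula M F" "respects_bounds M B"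
  shows "sat_formula M F0"
proof -
  have steps: "(lin_step F0 B)\<^sup>*\<^sup>* F0 F"
    using assms(1) by (simp add: linearization_def)
  have linear_sat: "sat_clause M C" if "C \<in> set F0" "linear_clause C" for C
    using lin_steps_keep_linear_clause[OF steps that] assms(2) by (simp add: sat_formula_def)
  show ?thesis
    using steps assms(2) has_lower_le[OF _ assms(3) linear_sat] has_upper_ge[OF _ assms(3) linear_sat]
    by (rule lin_steps_sat_back)
qed

lemma delta_nonneg: "delta z l u \<ge> 0"
  by (simp add: delta_def)

lemma delta_eq_0_iff: "delta z l u = 0 \<longleftrightarrow> l \<le> z \<and> z \<le> u"
  by (simp add: delta_def)

lemma cost_nonneg: "cost VB l u M \<ge> 0"
  by (simp add: cost_def sum_nonneg delta_nonneg)

lemma cost_eq_0_iff: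
  assumes "finite VB"
  shows "cost VB l u M = 0 \<longleftrightarrow> (\<forall>V\<in>VB. l V \<le> M V \<and> M V \<le> u V)"
  using assms by (simp add: cost_def sum_nonneg_eq_0_iff delta_nonneg delta_eq_0_iff)

lemma finite_bound_vars:
  assumes "finite B"
  shows "finite (bound_vars B)"
proof -
  have "bound_vars B \<subseteq> (\<lambda>b. case b of LowerB V K \<Rightarrow> V | UpperB V K \<Rightarrow> V) ` B"
    unfolding bound_vars_def by (auto intro: rev_image_eqI)
  then show ?thesis
    using \<open>finite B\<close> finite_subset by blast
qed

theorem lemma3p4:
  fixes F0 F :: "'v formula" and B :: "'v bound set"
    and l u :: "'v \<Rightarrow> int" and M :: "'v \<Rightarrow> int"
  assumes "finite B"
    and "bound_vars B \<subseteq> formula_vars F0"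
    and "\<And>V L. LowerB V L \<in> B \<Longrightarrow> L = l V"
    and "\<And>V U. UpperB V U \<in> B \<Longrightarrow> U = u V"
    and "linearization F0 B F"
    and "sat_formula M F"
  shows "cost (bound_vars B) l u M \<ge> 0
         \<and> (cost (bound_vars B) l u M = 0 \<longrightarrow> sat_formula M F0)"
proof (intro conjI impI cost_nonneg)
  assume "cost (bound_vars B) l u M = 0"
  then have "\<forall>V\<in>bound_vars B. l V \<le> M V \<and> M V \<le> u V"
    using cost_eq_0_iff finite_bound_vars[OF \<open>finite B\<close>] by blast
  then have "respects_bounds M B"
    using assms(3,4) unfolding respects_bounds_def bound_vars_def by blast
  with assms(5,6) show "sat_formula M F0"
    by (rule linearization_model_sound)
qed

end
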